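(* If $M\to_{\beta\mu}N$ and $\Gamma\vdash M:\delta\mid\Delta$ is derivable in the intersection type assignment system, then $\Gamma\vdash N:\delta\mid\Delta$ is derivable.
   Context: $\lambda\mu$ terms and commands: $M::=x\mid\lambda x.M\mid MN\mid\mu\alpha.\mathsf C$ and $\mathsf C::=[\alpha]M$. Structural substitution $T[\alpha\Leftarrow L]$ replaces, recursively, every subterm $[\alpha]N$ by $[\alpha](N[\alpha\Leftarrow L])L$. $\to_{\beta\mu}$ is the compatible closure of: - $(\lambda x.M)N\to M[N/x]$; - $(\mu\alpha.\mathsf C)N\to\mu\alpha.\mathsf C[\alpha\Leftarrow N]$; - $[\alpha]\mu\beta.\mathsf C\to\mathsf C[\alpha/\beta]$. Types (for a fixed $\omega$-algebraic lattice $R$): - $\Lambda_R$: $\rho::=\psi_a\mid\omega\mid\rho\wedge\rho$; - $\Lambda_D$: $\delta::=\rho\mid\kappa\to\rho\mid\omega\mid\delta\wedge\delta$; - $\Lambda_C$: $\kappa::=\delta\times\kappa\mid\omega\mid\kappa\wedge\kappa$. The relations $\le_R,\le_D,\le_C$ are the least reflexive, transitive relations with $\sigma\wedge\tau\le\sigma,\tau$, $\sigma\le\omega$, $\rho\le\sigma,\tau\Rightarrow\rho\le\sigma\wedge\tau$, and additionally: - $\psi_\bot\sim\omega$ and $\psi_{a\sqcup b}\sim\psi_a\wedge\psi_b$; - $\le_R\subseteq\le_D$; - $\omega\le_D\omega\to\omega$; - $\psi_a\le_D\omega\to\psi_a\le_D\psi_a$; - $\omega\le_C\omega\times\omega$;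 - $(\kappa\to\rho_1)\wedge(\kappa\to\rho_2)\le_D\kappa\to(\rho_1\wedge\rho_2)$; - $(\delta_1\times\kappa_1)\wedge(\delta_2\times\kappa_2)\le_C(\delta_1\wedge\delta_2)\times(\kappa_1\wedge\kappa_2)$; - $\to$ is contravariant in $\Lambda_C$ and covariant in $\Lambda_R$; - $\times$ is covariant in both arguments. Type assignment. Bases $\Gamma$ are finite maps from variables to $\Lambda_D$, and contexts $\Delta$ are finite maps from names to $\Lambda_C$. $\Gamma(x)$ and $\Delta(\alpha)$ are $\omega$ outside the domain. The rules are: - (Ax) $\Gamma,x{:}\delta\vdash x:\delta\mid\Delta$. - (Abs) From $\Gamma\vdash M:\kappa\to\rho\mid\Delta$, $\Gamma(x)=\delta$, infer $\Gamma\setminus x\vdash\lambda x.M:(\delta\times\kappa)\to\rho\mid\Delta$. - (App) From $\Gamma\vdash M:(\delta\times\kappa)\to\rho\mid\Delta$ and $\Gamma\vdash N:\delta\mid\Delta$, infer $\Gamma\vdash MN:\kappa\to\rho\mid\Delta$. - (Cmd) From $\Gamma\vdash M:\delta\mid\Delta$, $\Delta(\alpha)=\kappa$, infer $\Gamma\vdash[\alpha]M:\delta\times\kappa\mid\Delta$. - ($\mu$) From $\Gamma\vdash\mathsf C:(\kappa'\to\rho)\times\kappa'\mid\Delta$, $\Delta(\alpha)=\kappa$, infer $\Gamma\vdash\mu\alpha.\mathsf C:\kappa\to\rho\mid\Delta\setminus\alpha$. - ($\wedge$), ($\omega$) and ($\le$). *)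

theory Defs
  imports Main "HOL-Library.Countable_Set"
begin

definition directed_set :: "'a::complete_lattice set \<Rightarrow> bool" where
  "directed_set S \<longleftrightarrow> S \<noteq> {} \<and> (\<forall>x\<in>S. \<forall>y\<in>S. \<exists>z\<in>S. x \<le> z \<and> y \<le> z)"

definition compact_el :: "'a::complete_lattice \<Rightarrow> bool" where
  "compact_el a \<longleftrightarrow> (\<forall>S. directed_set S \<and> a \<le> Sup S \<longrightarrow> (\<exists>s\<in>S. a \<le> s))"

definition omega_algebraic :: "'a::complete_lattice itself \<Rightarrow> bool" where
  "omega_algebraic _ \<longleftrightarrow> countable {a::'a. compact_el a} \<and>
      (\<forall>x::'a. x = Sup {a. compact_el a \<and> a \<le> x})"

section \<open>lambda-mu terms (de Bruijn indices for variables and for names)\<close>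

datatype trm = Var nat | Lam trm | App trm trm | Mu cmd
     and cmd = Cmd nat trm

primrec liftV :: "nat \<Rightarrow> trm \<Rightarrow> trm" and liftVc :: "nat \<Rightarrow> cmd \<Rightarrow> cmd" where
  "liftV k (Var i) = (if k \<le> i then Var (Suc i) else Var i)"
| "liftV k (Lam M) = Lam (liftV (Suc k) M)"
| "liftV k (App M N) = App (liftV k M) (liftV k N)"
| "liftV k (Mu c) = Mu (liftVc k c)"
| "liftVc k (Cmd a M) = Cmd a (liftV k M)"

primrec liftN :: "nat \<Rightarrow> trm \<Rightarrow> trm" and liftNc :: "nat \<Rightarrow> cmd \<Rightarrow> cmd" where
  "liftN k (Var i) = Var i"
| "liftN k (Lam M) = Lam (liftN k M)"
| "liftN k (App M N) = App (liftN k M) (liftN k N)"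
| "liftN k (Mu c) = Mu (liftNc (Suc k) c)"
| "liftNc k (Cmd a M) = Cmd (if k \<le> a then Suc a else a) (liftN k M)"

primrec substV :: "nat \<Rightarrow> trm \<Rightarrow> trm \<Rightarrow> trm" and substVc :: "nat \<Rightarrow> trm \<Rightarrow> cmd \<Rightarrow> cmd" where
  "substV k N (Var i) = (if i = k then N else if k < i then Var (i - 1) else Var i)"
| "substV k N (Lam M) = Lam (substV (Suc k) (liftV 0 N) M)"
| "substV k N (App M1 M2) = App (substV k N M1) (substV k N M2)"
| "substV k N (Mu c) = Mu (substVc k (liftN 0 N) c)"
| "substVc k N (Cmd a M) = Cmd a (substV k N M)"

text \<open>Name renaming C[alpha/beta]: the name with index k is replaced by the name j,
  names above k are decremented (the binder of k disappears).\<close>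
primrec renN :: "nat \<Rightarrow> nat \<Rightarrow> trm \<Rightarrow> trm" and renNc :: "nat \<Rightarrow> nat \<Rightarrow> cmd \<Rightarrow> cmd" where
  "renN k j (Var i) = Var i"
| "renN k j (Lam M) = Lam (renN k j M)"
| "renN k j (App M N) = App (renN k j M) (renN k j N)"
| "renN k j (Mu c) = Mu (renNc (Suc k) (Suc j) c)"
| "renNc k j (Cmd a M) = Cmd (if a = k then j else if k < a then a - 1 else a) (renN k j M)"

primrec structN :: "nat \<Rightarrow> trm \<Rightarrow> trm \<Rightarrow> trm" and structNc :: "nat \<Rightarrow> trm \<Rightarrow> cmd \<Rightarrow> cmd" where
  "structN k L (Var i) = Var i"
| "structN k L (Lam M) = Lam (structN k (liftV 0 L) M)"
| "structN k L (App M N) = App (structN k L M) (structN k L N)"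
| "structN k L (Mu c) = Mu (structNc (Suc k) (liftN 0 L) c)"
| "structNc k L (Cmd a M) =
     (if a = k then Cmd a (App (structN k L M) L) else Cmd a (structN k L M))"

inductive red :: "trm \<Rightarrow> trm \<Rightarrow> bool" and redc :: "cmd \<Rightarrow> cmd \<Rightarrow> bool" where
  beta: "red (App (Lam M) N) (substV 0 N M)"
| mu: "red (App (Mu c) N) (Mu (structNc 0 (liftN 0 N) c))"
| ren: "redc (Cmd a (Mu c)) (renNc 0 a c)"
| lam: "red M M' \<Longrightarrow> red (Lam M) (Lam M')"
| appL: "red M M' \<Longrightarrow> red (App M N) (App M' N)"
| appR: "red N N' \<Longrightarrow> red (App M N) (App M N')"
| muC: "redc c c' \<Longrightarrow> red (Mu c) (Mu c')"
| cmdC: "red M M' \<Longrightarrow> redc (Cmd a M) (Cmd a M')"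

text \<open>Atoms psi_a are indexed by a type 'k which is put in bijection with the
  compact elements of R by a map emb (see the theorem). Lambda_R is the
  subset of Lambda_D singled out by isR.\<close>

datatype 'k dty = Psi 'k | OmD | AndD "'k dty" "'k dty" | Arr "'k cty" "'k dty"
     and 'k cty = Prod "'k dty" "'k cty" | OmC | AndC "'k cty" "'k cty"

primrec isR :: "'k dty \<Rightarrow> bool" where
  "isR (Psi a) = True"
| "isR OmD = True"
| "isR (AndD s t) = (isR s \<and> isR t)"
| "isR (Arr k r) = False"

primrec wfD :: "'k dty \<Rightarrow> bool" and wfC :: "'k cty \<Rightarrow> bool" where
  "wfD (Psi a) = True"
| "wfD OmD = True"
| "wfD (AndD s t) = (wfD s \<and> wfD t)"
| "wfD (Arr k r) = (wfC k \<and> isR r)"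
| "wfC (Prod d k) = (wfD d \<and> wfC k)"
| "wfC OmC = True"
| "wfC (AndC k1 k2) = (wfC k1 \<and> wfC k2)"

inductive leqR :: "('k \<Rightarrow> 'a::complete_lattice) \<Rightarrow> 'k dty \<Rightarrow> 'k dty \<Rightarrow> bool"
  for emb where
  R_refl: "isR s \<Longrightarrow> leqR emb s s"
| R_trans: "leqR emb r s \<Longrightarrow> leqR emb s t \<Longrightarrow> leqR emb r t"
| R_and1: "isR s \<Longrightarrow> isR t \<Longrightarrow> leqR emb (AndD s t) s"
| R_and2: "isR s \<Longrightarrow> isR t \<Longrightarrow> leqR emb (AndD s t) t"
| R_top: "isR s \<Longrightarrow> leqR emb s OmD"
| R_glb: "leqR emb r s \<Longrightarrow> leqR emb r t \<Longrightarrow> leqR emb r (AndD s t)"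
| R_bot1: "emb a = bot \<Longrightarrow> leqR emb (Psi a) OmD"
| R_bot2: "emb a = bot \<Longrightarrow> leqR emb OmD (Psi a)"
| R_join1: "emb c = sup (emb a) (emb b) \<Longrightarrow> leqR emb (Psi c) (AndD (Psi a) (Psi b))"
| R_join2: "emb c = sup (emb a) (emb b) \<Longrightarrow> leqR emb (AndD (Psi a) (Psi b)) (Psi c)"

inductive leqD :: "('k \<Rightarrow> 'a::complete_lattice) \<Rightarrow> 'k dty \<Rightarrow> 'k dty \<Rightarrow> bool"
      and leqC :: "('k \<Rightarrow> 'a::complete_lattice) \<Rightarrow> 'k cty \<Rightarrow> 'k cty \<Rightarrow> bool"
  for emb where
  D_refl: "wfD s \<Longrightarrow> leqD emb s s"
| D_trans: "leqD emb r s \<Longrightarrow> leqD emb s t \<Longrightarrow> leqD emb r t"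
| D_and1: "wfD s \<Longrightarrow> wfD t \<Longrightarrow> leqD emb (AndD s t) s"
| D_and2: "wfD s \<Longrightarrow> wfD t \<Longrightarrow> leqD emb (AndD s t) t"
| D_top: "wfD s \<Longrightarrow> leqD emb s OmD"
| D_glb: "leqD emb r s \<Longrightarrow> leqD emb r t \<Longrightarrow> leqD emb r (AndD s t)"
| D_R: "leqR emb r s \<Longrightarrow> leqD emb r s"
| D_om_arr: "leqD emb OmD (Arr OmC OmD)"
| D_psi_arr1: "leqD emb (Psi a) (Arr OmC (Psi a))"
| D_psi_arr2: "leqD emb (Arr OmC (Psi a)) (Psi a)"
| D_arr_and: "wfC k \<Longrightarrow> isR r1 \<Longrightarrow> isR r2 \<Longrightarrow>
     leqD emb (AndD (Arr k r1) (Arr k r2)) (Arr k (AndD r1 r2))"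
| D_arr: "leqC emb k' k \<Longrightarrow> leqR emb r r' \<Longrightarrow> leqD emb (Arr k r) (Arr k' r')"
| C_refl: "wfC s \<Longrightarrow> leqC emb s s"
| C_trans: "leqC emb r s \<Longrightarrow> leqC emb s t \<Longrightarrow> leqC emb r t"
| C_and1: "wfC s \<Longrightarrow> wfC t \<Longrightarrow> leqC emb (AndC s t) s"
| C_and2: "wfC s \<Longrightarrow> wfC t \<Longrightarrow> leqC emb (AndC s t) t"
| C_top: "wfC s \<Longrightarrow> leqC emb s OmC"
| C_glb: "leqC emb r s \<Longrightarrow> leqC emb r t \<Longrightarrow> leqC emb r (AndC s t)"
| C_om_prod: "leqC emb OmC (Prod OmD OmC)"
| C_prod_and: "wfD d1 \<Longrightarrow> wfD d2 \<Longrightarrow> wfC k1 \<Longrightarrow> wfC k2 \<Longrightarrow>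
     leqC emb (AndC (Prod d1 k1) (Prod d2 k2)) (Prod (AndD d1 d2) (AndC k1 k2))"
| C_prod: "leqD emb d d' \<Longrightarrow> leqC emb k k' \<Longrightarrow> leqC emb (Prod d k) (Prod d' k')"

text \<open>Bases and contexts are total maps (value omega outside the domain);
  binders are de Bruijn, so extending by x:delta / alpha:kappa is case_nat.\<close>

inductive tyass :: "('k \<Rightarrow> 'a::complete_lattice) \<Rightarrow> (nat \<Rightarrow> 'k dty) \<Rightarrow> (nat \<Rightarrow> 'k cty)
                   \<Rightarrow> trm \<Rightarrow> 'k dty \<Rightarrow> bool"
      and tyassc :: "('k \<Rightarrow> 'a::complete_lattice) \<Rightarrow> (nat \<Rightarrow> 'k dty) \<Rightarrow> (nat \<Rightarrow> 'k cty)
                   \<Rightarrow> cmd \<Rightarrow> 'k cty \<Rightarrow> bool"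
  for emb where
  T_Ax: "tyass emb \<Gamma> \<Delta> (Var x) (\<Gamma> x)"
| T_Abs: "wfD d \<Longrightarrow> tyass emb (case_nat d \<Gamma>) \<Delta> M (Arr k r) \<Longrightarrow>
     tyass emb \<Gamma> \<Delta> (Lam M) (Arr (Prod d k) r)"
| T_App: "tyass emb \<Gamma> \<Delta> M (Arr (Prod d k) r) \<Longrightarrow> tyass emb \<Gamma> \<Delta> N d \<Longrightarrow>
     tyass emb \<Gamma> \<Delta> (App M N) (Arr k r)"
| T_Mu: "wfC k \<Longrightarrow> tyassc emb \<Gamma> (case_nat k \<Delta>) c (Prod (Arr k' r) k') \<Longrightarrow>
     tyass emb \<Gamma> \<Delta> (Mu c) (Arr k r)"
| T_And: "tyass emb \<Gamma> \<Delta> M s \<Longrightarrow> tyass emb \<Gamma> \<Delta> M t \<Longrightarrow> tyass emb \<Gamma> \<Delta> M (AndD s t)"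
| T_Om: "tyass emb \<Gamma> \<Delta> M OmD"
| T_Sub: "tyass emb \<Gamma> \<Delta> M s \<Longrightarrow> leqD emb s t \<Longrightarrow> tyass emb \<Gamma> \<Delta> M t"
| T_Cmd: "tyass emb \<Gamma> \<Delta> M d \<Longrightarrow> tyassc emb \<Gamma> \<Delta> (Cmd a M) (Prod d (\<Delta> a))"
| TC_And: "tyassc emb \<Gamma> \<Delta> c s \<Longrightarrow> tyassc emb \<Gamma> \<Delta> c t \<Longrightarrow> tyassc emb \<Gamma> \<Delta> c (AndC s t)"
| TC_Om: "tyassc emb \<Gamma> \<Delta> c OmC"
| TC_Sub: "tyassc emb \<Gamma> \<Delta> c s \<Longrightarrow> leqC emb s t \<Longrightarrow> tyassc emb \<Gamma> \<Delta> c t"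

end

theory Submission
  imports Defs
begin

text \<open>Typings are closed under
  \<open>\<and>\<close>, \<open>\<omega>\<close> and \<open>\<le>\<close>, so every type of a term arises from types given to it by its
  syntax-directed rule, and only those need to be transferred. For the redexes one inverts
  abstractions: if \<open>\<lambda>x.M\<close> has type \<open>\<delta>\<close>, then \<open>M\<close> has type \<open>\<kappa> \<rightarrow> \<rho>\<close> under \<open>x : d\<close>, where
  \<open>\<rho>\<close> collects the results of the arrow components of \<open>\<delta>\<close> accepting \<open>d \<times> \<kappa>\<close>, and
  similarly for \<open>\<mu>\<alpha>.C\<close>. Substitution, renaming and structural substitution lemmas
  then handle the three redexes. Commands are only tracked at types \<open>(\<kappa>' \<rightarrow> \<rho>) \<times> \<kappa>'\<close>,
  the ones the \<open>\<mu>\<close>-rule consumes.\<close>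

lemma leqR_isR: "leqR emb s t \<Longrightarrow> isR s \<and> isR t"
  by (induction rule: leqR.induct) auto

lemma isR_wfD: "isR s \<Longrightarrow> wfD s"
  by (induction s) auto

lemma leqD_leqC_wf:
  "leqD emb s t \<Longrightarrow> wfD s \<and> wfD t"
  "leqC emb k k' \<Longrightarrow> wfC k \<and> wfC k'"
  by (induction rule: leqD_leqC.inducts) (auto dest: leqR_isR isR_wfD)

lemma tyass_tyassc_wf:
  "tyass emb \<Gamma> \<Delta> M \<tau> \<Longrightarrow> \<forall>x. wfD (\<Gamma> x) \<Longrightarrow> \<forall>a. wfC (\<Delta> a) \<Longrightarrow> wfD \<tau>"
  "tyassc emb \<Gamma> \<Delta> c \<kappa> \<Longrightarrow> \<forall>x. wfD (\<Gamma> x) \<Longrightarrow> \<forall>a. wfC (\<Delta> a) \<Longrightarrow> wfC \<kappa>"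
  by (induction rule: tyass_tyassc.inducts) (auto split: nat.split dest: leqD_leqC_wf)

fun prod_hd :: "'k cty \<Rightarrow> 'k dty" where
  "prod_hd (Prod d k) = d"
| "prod_hd OmC = OmD"
| "prod_hd (AndC k1 k2) = AndD (prod_hd k1) (prod_hd k2)"

fun prod_tl :: "'k cty \<Rightarrow> 'k cty" where
  "prod_tl (Prod d k) = k"
| "prod_tl OmC = OmC"
| "prod_tl (AndC k1 k2) = AndC (prod_tl k1) (prod_tl k2)"

lemma wf_prod_hd_tl: "wfC k \<Longrightarrow> wfD (prod_hd k) \<and> wfC (prod_tl k)"
  by (induction k rule: prod_hd.induct) auto

lemma leqC_prod_hd_tl:
  "leqC emb k k' \<Longrightarrow> leqD emb (prod_hd k) (prod_hd k') \<and> leqC emb (prod_tl k) (prod_tl k')"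
  by (induction rule: leqD_leqC.inducts(2)[where ?P1.0 = "\<lambda>_ _. True"])
    (auto intro: leqD_leqC.intros dest: wf_prod_hd_tl leqD_leqC_wf)

lemma leqC_ProdD: "leqC emb (Prod d k) (Prod d' k') \<Longrightarrow> leqD emb d d' \<and> leqC emb k k'"
  using leqC_prod_hd_tl by fastforce

lemma leqD_OmD_Arr: "wfC k \<Longrightarrow> leqD emb OmD (Arr k OmD)"
  by (rule D_trans[OF D_om_arr D_arr[OF C_top R_refl]]) simp_all

lemma leqC_OmC_Prod_Arr: "leqC emb OmC (Prod (Arr OmC OmD) OmC)"
  by (rule C_trans[OF C_om_prod C_prod[OF D_om_arr C_refl]]) simp

lemma leqC_Prod_AndC:
  assumes "leqC emb (Prod e1 \<kappa>) s" and "leqC emb (Prod e2 \<kappa>) t"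
    and "wfD e1" and "wfD e2" and "wfC \<kappa>"
  shows "leqC emb (Prod (AndD e1 e2) \<kappa>) (AndC s t)"
  using assms
  by (intro C_glb C_trans[OF C_prod[OF D_and1 C_refl]] C_trans[OF C_prod[OF D_and2 C_refl]])

lemma leqC_AndC_Prod_Arr:
  assumes "wfC k1" and "wfC k2" and "isR r1" and "isR r2"
  shows "leqC emb (AndC (Prod (Arr k1 r1) k1) (Prod (Arr k2 r2) k2))
                  (Prod (Arr (AndC k1 k2) (AndD r1 r2)) (AndC k1 k2))"
proof -
  have "leqD emb (AndD (Arr k1 r1) (Arr k2 r2)) (Arr (AndC k1 k2) (AndD r1 r2))"
    using assms
    by (intro D_trans[OF D_glb D_arr_and] D_trans[OF D_and1 D_arr[OF C_and1 R_refl]]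
        D_trans[OF D_and2 D_arr[OF C_and2 R_refl]]) simp_all
  then show ?thesis
    using assms by (intro C_trans[OF C_prod_and C_prod[OF _ C_refl]]) simp_all
qed

text \<open>\<open>ty_app emb \<delta> \<kappa>\<close> is the meet of the results \<open>\<rho>\<close> of those arrow components
  \<open>\<kappa>' \<rightarrow> \<rho>\<close> of \<open>\<delta>\<close> with \<open>\<kappa> \<le> \<kappa>'\<close>; an atom \<open>\<psi>\<^sub>a\<close> counts as \<open>\<omega> \<rightarrow> \<psi>\<^sub>a\<close>.\<close>

primrec ty_app :: "('k \<Rightarrow> 'a::complete_lattice) \<Rightarrow> 'k dty \<Rightarrow> 'k cty \<Rightarrow> 'k dty" where
  "ty_app emb (Psi a) \<kappa> = Psi a"
| "ty_app emb OmD \<kappa> = OmD"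
| "ty_app emb (AndD s t) \<kappa> = AndD (ty_app emb s \<kappa>) (ty_app emb t \<kappa>)"
| "ty_app emb (Arr k r) \<kappa> = (if leqC emb \<kappa> k then r else OmD)"

lemma isR_ty_app: "wfD s \<Longrightarrow> isR (ty_app emb s \<kappa>)"
  by (induction s) auto

lemma ty_app_isR: "isR s \<Longrightarrow> ty_app emb s \<kappa> = s"
  by (induction s) auto

lemma ty_app_mono:
  "leqD emb s t \<Longrightarrow> wfC \<kappa> \<Longrightarrow> leqR emb (ty_app emb s \<kappa>) (ty_app emb t \<kappa>)"
proof (induction arbitrary: \<kappa> rule: leqD_leqC.inducts(1)[where ?P2.0 = "\<lambda>_ _. True"])
  case (D_R r s)
  then show ?case by (metis leqR_isR ty_app_isR)
next
  case (D_arr k' k r r')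
  then show ?case using leqR_isR by (auto intro: leqR.intros leqD_leqC.intros)
qed (auto intro: leqR.intros leqD_leqC.intros isR_ty_app)

definition insert_at :: "nat \<Rightarrow> 'b \<Rightarrow> (nat \<Rightarrow> 'b) \<Rightarrow> nat \<Rightarrow> 'b" where
  "insert_at k d G = (\<lambda>i. if i < k then G i else if i = k then d else G (i - 1))"

lemma insert_at_0: "insert_at 0 d G = case_nat d G"
  by (rule ext) (auto simp: insert_at_def split: nat.split)

lemma case_nat_insert_at: "case_nat d0 (insert_at k d G) = insert_at (Suc k) d (case_nat d0 G)"
  by (rule ext) (auto simp: insert_at_def split: nat.split)

lemma tyass_liftV:
  "tyass emb \<Gamma> \<Delta> M \<tau> \<Longrightarrow> tyass emb (insert_at k d \<Gamma>) \<Delta> (liftV k M) \<tau>"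
  "tyassc emb \<Gamma> \<Delta> c \<kappa> \<Longrightarrow> tyassc emb (insert_at k d \<Gamma>) \<Delta> (liftVc k c) \<kappa>"
proof (induction arbitrary: k and k rule: tyass_tyassc.inducts)
  case (T_Ax \<Gamma> \<Delta> x)
  have "insert_at k d \<Gamma> (if k \<le> x then Suc x else x) = \<Gamma> x"
    by (auto simp: insert_at_def)
  then show ?case
    using tyass_tyassc.T_Ax[of emb "insert_at k d \<Gamma>" \<Delta> "if k \<le> x then Suc x else x"]
    by (simp only: liftV.simps if_distrib[of Var])
next
  case (T_Abs d0 \<Gamma> \<Delta> M k0 r)
  then show ?case by (simp add: case_nat_insert_at tyass_tyassc.T_Abs)
qed (simp_all, (blast intro: tyass_tyassc.intros)+)

lemma tyass_liftN:
  "tyass emb \<Gamma> \<Delta> M \<tau> \<Longrightarrow> tyass emb \<Gamma> (insert_at k d \<Delta>) (liftN k M) \<tau>"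
  "tyassc emb \<Gamma> \<Delta> c \<kappa> \<Longrightarrow> tyassc emb \<Gamma> (insert_at k d \<Delta>) (liftNc k c) \<kappa>"
proof (induction arbitrary: k and k rule: tyass_tyassc.inducts)
  case (T_Mu k0 \<Gamma> \<Delta> c k' r)
  have "tyassc emb \<Gamma> (case_nat k0 (insert_at k d \<Delta>)) (liftNc (Suc k) c) (Prod (Arr k' r) k')"
    using T_Mu.IH by (simp only: case_nat_insert_at)
  then show ?case by (simp add: T_Mu.hyps tyass_tyassc.T_Mu)
next
  case (T_Cmd \<Gamma> \<Delta> M d' a)
  have "insert_at k d \<Delta> (if k \<le> a then Suc a else a) = \<Delta> a"
    by (auto simp: insert_at_def)
  moreover have "tyass emb \<Gamma> (insert_at k d \<Delta>) (liftN k M) d'" by (rule T_Cmd.IH)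
  ultimately show ?case
    using tyass_tyassc.T_Cmd[of emb \<Gamma> "insert_at k d \<Delta>" "liftN k M" d' "if k \<le> a then Suc a else a"]
    by (simp only: liftNc.simps)
qed (simp_all, (blast intro: tyass_tyassc.intros)+)

lemma tyass_substV:
  "tyass emb \<Gamma>' \<Delta> M \<tau> \<Longrightarrow> \<Gamma>' = insert_at k d \<Gamma> \<Longrightarrow> tyass emb \<Gamma> \<Delta> N d
     \<Longrightarrow> tyass emb \<Gamma> \<Delta> (substV k N M) \<tau>"
  "tyassc emb \<Gamma>' \<Delta> c \<kappa> \<Longrightarrow> \<Gamma>' = insert_at k d \<Gamma> \<Longrightarrow> tyass emb \<Gamma> \<Delta> N d
     \<Longrightarrow> tyassc emb \<Gamma> \<Delta> (substVc k N c) \<kappa>"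
proof (induction arbitrary: k \<Gamma> N and k \<Gamma> N rule: tyass_tyassc.inducts)
  case (T_Ax \<Gamma>' \<Delta> x)
  then show ?case
    using tyass_tyassc.T_Ax[of emb \<Gamma> \<Delta> "x - 1"] tyass_tyassc.T_Ax[of emb \<Gamma> \<Delta> x]
    by (auto simp: insert_at_def)
next
  case (T_Abs d0 \<Gamma>' \<Delta> M k0 r)
  have "tyass emb (case_nat d0 \<Gamma>) \<Delta> (liftV 0 N) d"
    using tyass_liftV(1)[OF T_Abs.prems(2), where k=0 and d=d0] by (simp add: insert_at_0)
  moreover have "case_nat d0 \<Gamma>' = insert_at (Suc k) d (case_nat d0 \<Gamma>)"
    using T_Abs.prems(1) by (simp add: case_nat_insert_at)
  ultimately have "tyass emb (case_nat d0 \<Gamma>) \<Delta> (substV (Suc k) (liftV 0 N) M) (Arr k0 r)"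
    using T_Abs.IH by blast
  then show ?case by (simp add: T_Abs.hyps tyass_tyassc.T_Abs)
next
  case (T_Mu k0 \<Gamma>' \<Delta> c k' r)
  have "tyass emb \<Gamma> (case_nat k0 \<Delta>) (liftN 0 N) d"
    using tyass_liftN(1)[OF T_Mu.prems(2), where k=0 and d=k0] by (simp add: insert_at_0)
  then have "tyassc emb \<Gamma> (case_nat k0 \<Delta>) (substVc k (liftN 0 N) c) (Prod (Arr k' r) k')"
    using T_Mu.IH T_Mu.prems(1) by blast
  then show ?case by (simp add: T_Mu.hyps tyass_tyassc.T_Mu)
qed (simp_all, (blast intro: tyass_tyassc.intros)+)

lemma tyass_renN:
  "tyass emb \<Gamma> \<Delta>' M \<tau> \<Longrightarrow> \<Delta>' = insert_at k (\<Delta> j) \<Delta> \<Longrightarrow> tyass emb \<Gamma> \<Delta> (renN k j M) \<tau>"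
  "tyassc emb \<Gamma> \<Delta>' c \<kappa> \<Longrightarrow> \<Delta>' = insert_at k (\<Delta> j) \<Delta> \<Longrightarrow> tyassc emb \<Gamma> \<Delta> (renNc k j c) \<kappa>"
proof (induction arbitrary: k j \<Delta> and k j \<Delta> rule: tyass_tyassc.inducts)
  case (T_Mu k0 \<Gamma> \<Delta>' c k' r)
  have "tyassc emb \<Gamma> (case_nat k0 \<Delta>) (renNc (Suc k) (Suc j) c) (Prod (Arr k' r) k')"
    by (rule T_Mu.IH) (simp only: T_Mu.prems case_nat_insert_at nat.case)
  then show ?case by (simp add: T_Mu.hyps tyass_tyassc.T_Mu)
next
  case (T_Cmd \<Gamma> \<Delta>' M d a)
  define a' where "a' = (if a = k then j else if k < a then a - 1 else a)"
  have "\<Delta> a' = \<Delta>' a" using T_Cmd.prems by (auto simp: insert_at_def a'_def)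
  moreover have "tyass emb \<Gamma> \<Delta> (renN k j M) d" using T_Cmd by blast
  ultimately show ?case
    using tyass_tyassc.T_Cmd[of emb \<Gamma> \<Delta> "renN k j M" d a'] by (simp add: a'_def)
qed (simp_all, (blast intro: tyass_tyassc.intros)+)

lemma tyass_narrow:
  "tyass emb \<Gamma> \<Delta> M \<tau> \<Longrightarrow> \<forall>x. leqD emb (\<Gamma>' x) (\<Gamma> x) \<Longrightarrow> \<forall>a. leqC emb (\<Delta>' a) (\<Delta> a)
     \<Longrightarrow> tyass emb \<Gamma>' \<Delta>' M \<tau>"
  "tyassc emb \<Gamma> \<Delta> c \<kappa> \<Longrightarrow> \<forall>x. leqD emb (\<Gamma>' x) (\<Gamma> x) \<Longrightarrow> \<forall>a. leqC emb (\<Delta>' a) (\<Delta> a)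
     \<Longrightarrow> tyassc emb \<Gamma>' \<Delta>' c \<kappa>"
proof (induction arbitrary: \<Gamma>' \<Delta>' and \<Gamma>' \<Delta>' rule: tyass_tyassc.inducts)
  case (T_Ax \<Gamma> \<Delta> x)
  then show ?case by (auto intro: tyass_tyassc.intros)
next
  case (T_Abs d \<Gamma> \<Delta> M k r)
  then have "\<forall>x. leqD emb (case_nat d \<Gamma>' x) (case_nat d \<Gamma> x)"
    by (auto split: nat.split intro: D_refl)
  then show ?case using T_Abs by (auto intro: tyass_tyassc.T_Abs)
next
  case (T_Mu k \<Gamma> \<Delta> c k' r)
  then have "\<forall>a. leqC emb (case_nat k \<Delta>' a) (case_nat k \<Delta> a)"
    by (auto split: nat.split intro: C_refl)
  then show ?case using T_Mu by (auto intro: tyass_tyassc.T_Mu)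
next
  case (T_Cmd \<Gamma> \<Delta> M d a)
  then have M: "tyass emb \<Gamma>' \<Delta>' M d" by blast
  have "wfD d" using tyass_tyassc_wf(1)[OF M] T_Cmd.prems leqD_leqC_wf by blast
  then have "leqC emb (Prod d (\<Delta>' a)) (Prod d (\<Delta> a))"
    using T_Cmd.prems by (auto intro: C_prod D_refl)
  then show ?case using M by (auto intro: tyass_tyassc.intros)
qed (blast intro: tyass_tyassc.intros)+

lemma tyass_type_closure:
  assumes "tyass emb \<Gamma> \<Delta> M \<delta>"
    and "P OmD"
    and "\<And>s t. P s \<Longrightarrow> P t \<Longrightarrow> P (AndD s t)"
    and "\<And>s t. P s \<Longrightarrow> leqD emb s t \<Longrightarrow> P t"
    and "\<And>x. M = Var x \<Longrightarrow> P (\<Gamma> x)"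
    and "\<And>d M' k r. M = Lam M' \<Longrightarrow> wfD d \<Longrightarrow> tyass emb (case_nat d \<Gamma>) \<Delta> M' (Arr k r)
           \<Longrightarrow> P (Arr (Prod d k) r)"
    and "\<And>M' N' d k r. M = App M' N' \<Longrightarrow> tyass emb \<Gamma> \<Delta> M' (Arr (Prod d k) r)
           \<Longrightarrow> tyass emb \<Gamma> \<Delta> N' d \<Longrightarrow> P (Arr k r)"
    and "\<And>c k k' r. M = Mu c \<Longrightarrow> wfC k \<Longrightarrow> tyassc emb \<Gamma> (case_nat k \<Delta>) c (Prod (Arr k' r) k')
           \<Longrightarrow> P (Arr k r)"
  shows "P \<delta>"
proof -
  have "tyass emb G D X \<tau> \<Longrightarrow> G = \<Gamma> \<Longrightarrow> D = \<Delta> \<Longrightarrow> X = M \<Longrightarrow> P \<tau>" for G D X \<tau>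
    by (induction rule: tyass_tyassc.inducts(1)[where ?P2.0 = "\<lambda>_ _ _ _. True"])
      (use assms in auto)
  then show ?thesis using assms(1) by blast
qed

lemma tyass_App_transfer:
  assumes "tyass emb \<Gamma> \<Delta> (App M N) \<delta>"
    and "\<And>d k r. tyass emb \<Gamma> \<Delta> M (Arr (Prod d k) r) \<Longrightarrow> tyass emb \<Gamma> \<Delta> N d
           \<Longrightarrow> tyass emb \<Gamma> \<Delta> X (Arr k r)"
  shows "tyass emb \<Gamma> \<Delta> X \<delta>"
  using assms(1) by (rule tyass_type_closure) (auto intro: T_Om T_And assms(2) elim: T_Sub)

lemma tyass_Lam_transfer:
  assumes "tyass emb \<Gamma> \<Delta> (Lam M) \<delta>"
    and "\<And>d k r. wfD d \<Longrightarrow> tyass emb (case_nat d \<Gamma>) \<Delta> M (Arr k r)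
           \<Longrightarrow> tyass emb \<Gamma> \<Delta> X (Arr (Prod d k) r)"
  shows "tyass emb \<Gamma> \<Delta> X \<delta>"
  using assms(1) by (rule tyass_type_closure) (auto intro: T_Om T_And assms(2) elim: T_Sub)

lemma tyass_Mu_transfer:
  assumes "tyass emb \<Gamma> \<Delta> (Mu c) \<delta>"
    and "\<And>k k' r. wfC k \<Longrightarrow> tyassc emb \<Gamma> (case_nat k \<Delta>) c (Prod (Arr k' r) k')
           \<Longrightarrow> tyass emb \<Gamma> \<Delta> X (Arr k r)"
  shows "tyass emb \<Gamma> \<Delta> X \<delta>"
  using assms(1) by (rule tyass_type_closure) (auto intro: T_Om T_And assms(2) elim: T_Sub)

lemma tyass_Arr_OmD: "wfC k \<Longrightarrow> tyass emb \<Gamma> \<Delta> M (Arr k OmD)"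
  by (rule T_Sub[OF T_Om leqD_OmD_Arr])

lemma tyassc_Prod_Arr_OmD: "tyassc emb \<Gamma> \<Delta> c (Prod (Arr OmC OmD) OmC)"
  by (rule TC_Sub[OF TC_Om leqC_OmC_Prod_Arr])

lemma tyass_Lam_body:
  assumes \<Gamma>: "\<forall>x. wfD (\<Gamma> x)" and \<Delta>: "\<forall>a. wfC (\<Delta> a)"
    and M: "tyass emb \<Gamma> \<Delta> (Lam M) \<delta>" and d: "wfD d" and k: "wfC k"
  shows "tyass emb (case_nat d \<Gamma>) \<Delta> M (Arr k (ty_app emb \<delta> (Prod d k)))"
proof -
  let ?P = "\<lambda>\<tau>. wfD \<tau> \<longrightarrow> tyass emb (case_nat d \<Gamma>) \<Delta> M (Arr k (ty_app emb \<tau> (Prod d k)))"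
  have "?P \<delta>"
  proof (rule tyass_type_closure[OF M])
    show "?P OmD" by (simp add: tyass_Arr_OmD k)
  next
    fix s t assume "?P s" "?P t"
    then show "?P (AndD s t)"
      using k by (auto intro!: T_Sub[OF T_And D_arr_and] isR_ty_app)
  next
    fix s t assume Ps: "?P s" and st: "leqD emb s t"
    have "leqD emb (Arr k (ty_app emb s (Prod d k))) (Arr k (ty_app emb t (Prod d k)))"
      using st d k by (simp add: D_arr C_refl ty_app_mono)
    then show "?P t" using Ps leqD_leqC_wf(1)[OF st] by (blast intro: T_Sub)
  next
    fix d0 M' k0 r
    assume "Lam M = Lam M'" and M': "tyass emb (case_nat d0 \<Gamma>) \<Delta> M' (Arr k0 r)"
    show "?P (Arr (Prod d0 k0) r)"
    proof
      assume wf: "wfD (Arr (Prod d0 k0) r)"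
      show "tyass emb (case_nat d \<Gamma>) \<Delta> M (Arr k (ty_app emb (Arr (Prod d0 k0) r) (Prod d k)))"
      proof (cases "leqC emb (Prod d k) (Prod d0 k0)")
        case True
        then have "leqD emb d d0" and "leqC emb k k0" using leqC_ProdD by blast+
        have "\<forall>x. leqD emb (case_nat d \<Gamma> x) (case_nat d0 \<Gamma> x)"
          using \<open>leqD emb d d0\<close> \<Gamma> by (simp add: D_refl split: nat.split)
        moreover have "\<forall>a. leqC emb (\<Delta> a) (\<Delta> a)" using \<Delta> by (simp add: C_refl)
        ultimately have "tyass emb (case_nat d \<Gamma>) \<Delta> M (Arr k0 r)"
          using tyass_narrow(1)[OF M'] \<open>Lam M = Lam M'\<close> by simp
        moreover have "leqD emb (Arr k0 r) (Arr k r)"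
          using \<open>leqC emb k k0\<close> wf by (simp add: D_arr R_refl)
        ultimately show ?thesis using True by (simp add: T_Sub)
      qed (simp add: tyass_Arr_OmD k)
    qed
  qed simp_all
  then show ?thesis using tyass_tyassc_wf(1)[OF M \<Gamma> \<Delta>] by blast
qed

lemma tyass_Mu_body:
  assumes \<Gamma>: "\<forall>x. wfD (\<Gamma> x)" and \<Delta>: "\<forall>a. wfC (\<Delta> a)"
    and M: "tyass emb \<Gamma> \<Delta> (Mu c) \<delta>" and \<kappa>: "wfC \<kappa>"
  shows "\<exists>k'. tyassc emb \<Gamma> (case_nat \<kappa> \<Delta>) c (Prod (Arr k' (ty_app emb \<delta> \<kappa>)) k')"
proof -
  let ?P = "\<lambda>\<tau>. wfD \<tau> \<longrightarrow>
    (\<exists>k'. wfC k' \<and> tyassc emb \<Gamma> (case_nat \<kappa> \<Delta>) c (Prod (Arr k' (ty_app emb \<tau> \<kappa>)) k'))"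
  have "?P \<delta>"
  proof (rule tyass_type_closure[OF M])
    show "?P OmD" by (auto intro!: exI[of _ OmC] tyassc_Prod_Arr_OmD)
  next
    fix s t assume Ps: "?P s" and Pt: "?P t"
    show "?P (AndD s t)"
    proof
      assume st: "wfD (AndD s t)"
      then obtain k1 k2
        where "wfC k1" "tyassc emb \<Gamma> (case_nat \<kappa> \<Delta>) c (Prod (Arr k1 (ty_app emb s \<kappa>)) k1)"
          and "wfC k2" "tyassc emb \<Gamma> (case_nat \<kappa> \<Delta>) c (Prod (Arr k2 (ty_app emb t \<kappa>)) k2)"
        using Ps Pt by (meson wfD.simps(3))
      with st show "\<exists>k'. wfC k' \<and> tyassc emb \<Gamma> (case_nat \<kappa> \<Delta>) c
                                     (Prod (Arr k' (ty_app emb (AndD s t) \<kappa>)) k')"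
        by (auto intro!: exI[of _ "AndC k1 k2"] TC_Sub[OF TC_And leqC_AndC_Prod_Arr] isR_ty_app)
    qed
  next
    fix s t assume Ps: "?P s" and st: "leqD emb s t"
    show "?P t"
    proof
      obtain k1 where "wfC k1" "tyassc emb \<Gamma> (case_nat \<kappa> \<Delta>) c (Prod (Arr k1 (ty_app emb s \<kappa>)) k1)"
        using Ps leqD_leqC_wf(1)[OF st] by blast
      moreover have "leqC emb (Prod (Arr k1 (ty_app emb s \<kappa>)) k1) (Prod (Arr k1 (ty_app emb t \<kappa>)) k1)"
        using \<open>wfC k1\<close> \<kappa> st by (simp add: C_prod D_arr C_refl ty_app_mono)
      ultimately show "\<exists>k'. wfC k' \<and> tyassc emb \<Gamma> (case_nat \<kappa> \<Delta>) c (Prod (Arr k' (ty_app emb t \<kappa>)) k')"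
        by (blast intro: TC_Sub)
    qed
  next
    fix c' k0 k' r
    assume "Mu c = Mu c'" "wfC k0" and c': "tyassc emb \<Gamma> (case_nat k0 \<Delta>) c' (Prod (Arr k' r) k')"
    show "?P (Arr k0 r)"
    proof
      show "\<exists>k''. wfC k'' \<and> tyassc emb \<Gamma> (case_nat \<kappa> \<Delta>) c (Prod (Arr k'' (ty_app emb (Arr k0 r) \<kappa>)) k'')"
      proof (cases "leqC emb \<kappa> k0")
        case True
        have "\<forall>x. leqD emb (\<Gamma> x) (\<Gamma> x)" using \<Gamma> by (simp add: D_refl)
        moreover have "\<forall>a. leqC emb (case_nat \<kappa> \<Delta> a) (case_nat k0 \<Delta> a)"
          using True \<Delta> by (simp add: C_refl split: nat.split)
        ultimately have "tyassc emb \<Gamma> (case_nat \<kappa> \<Delta>) c (Prod (Arr k' r) k')"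
          using tyass_narrow(2)[OF c'] \<open>Mu c = Mu c'\<close> by simp
        moreover have "wfC k'"
          using tyass_tyassc_wf(2)[OF c'] \<Gamma> \<Delta> \<open>wfC k0\<close> by (simp split: nat.split)
        ultimately show ?thesis using True by auto
      qed (auto intro!: exI[of _ OmC] tyassc_Prod_Arr_OmD)
    qed
  qed simp_all
  then show ?thesis using tyass_tyassc_wf(1)[OF M \<Gamma> \<Delta>] by blast
qed

lemma tyassc_Cmd_inv:
  assumes \<Gamma>: "\<forall>x. wfD (\<Gamma> x)" and \<Delta>: "\<forall>a. wfC (\<Delta> a)"
    and "tyassc emb \<Gamma> \<Delta> (Cmd b M) \<kappa>"
  shows "\<exists>e. tyass emb \<Gamma> \<Delta> M e \<and> leqC emb (Prod e (\<Delta> b)) \<kappa>"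
proof -
  have "tyassc emb \<Gamma> \<Delta> c \<kappa> \<Longrightarrow> c = Cmd b M \<Longrightarrow> \<forall>x. wfD (\<Gamma> x) \<Longrightarrow> \<forall>a. wfC (\<Delta> a)
          \<Longrightarrow> \<exists>e. tyass emb \<Gamma> \<Delta> M e \<and> leqC emb (Prod e (\<Delta> b)) \<kappa>" for \<Gamma> \<Delta> c \<kappa>
  proof (induction rule: tyass_tyassc.inducts(2)[where ?P1.0 = "\<lambda>_ _ _ _. True"])
    case (T_Cmd \<Gamma> \<Delta> M' d a)
    then show ?case using tyass_tyassc_wf(1) by (blast intro: C_refl wfC.simps(1)[THEN iffD2])
  next
    case (TC_And \<Gamma> \<Delta> c s t)
    then obtain e1 e2 where "tyass emb \<Gamma> \<Delta> M e1" "leqC emb (Prod e1 (\<Delta> b)) s"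
      and "tyass emb \<Gamma> \<Delta> M e2" "leqC emb (Prod e2 (\<Delta> b)) t" by blast
    with TC_And.prems show ?case
      by (blast intro: T_And leqC_Prod_AndC dest: tyass_tyassc_wf(1))
  next
    case (TC_Om \<Gamma> \<Delta> c)
    then show ?case by (blast intro: T_Om C_top wfC.simps(1)[THEN iffD2] wfD.simps(2)[THEN iffD2])
  next
    case (TC_Sub \<Gamma> \<Delta> c s t)
    then show ?case by (blast intro: C_trans)
  qed simp_all
  then show ?thesis using assms by blast
qed

lemma tyassc_structNc_Cmd:
  assumes M: "tyass emb \<Gamma> \<Delta>' (structN \<alpha> L M) e"
    and le: "leqC emb (Prod e (\<Delta> b)) (Prod (Arr k' \<rho>) k')"
    and \<alpha>: "\<Delta> \<alpha> = Prod d (\<Delta>' \<alpha>)" and \<Delta>': "\<forall>\<beta>. \<beta> \<noteq> \<alpha> \<longrightarrow> \<Delta>' \<beta> = \<Delta> \<beta>"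
    and L: "tyass emb \<Gamma> \<Delta>' L d"
  shows "\<exists>k''. tyassc emb \<Gamma> \<Delta>' (structNc \<alpha> L (Cmd b M)) (Prod (Arr k'' \<rho>) k'')"
proof -
  have e: "leqD emb e (Arr k' \<rho>)" and b: "leqC emb (\<Delta> b) k'" using leqC_ProdD[OF le] by blast+
  have wf: "wfD (Arr k' \<rho>)" using leqD_leqC_wf(1)[OF e] by blast
  show ?thesis
  proof (cases "b = \<alpha>")
    case True
    with b \<alpha> wf have "leqD emb (Arr k' \<rho>) (Arr (Prod d (\<Delta>' \<alpha>)) \<rho>)" by (simp add: D_arr R_refl)
    then have "tyass emb \<Gamma> \<Delta>' (structN \<alpha> L M) (Arr (Prod d (\<Delta>' \<alpha>)) \<rho>)"
      using T_Sub[OF M D_trans[OF e]] by blast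
    then have "tyass emb \<Gamma> \<Delta>' (App (structN \<alpha> L M) L) (Arr (\<Delta>' \<alpha>) \<rho>)"
      using T_App L by blast
    then have "tyassc emb \<Gamma> \<Delta>' (Cmd \<alpha> (App (structN \<alpha> L M) L)) (Prod (Arr (\<Delta>' \<alpha>) \<rho>) (\<Delta>' \<alpha>))"
      by (rule T_Cmd)
    with True show ?thesis by auto
  next
    case False
    then have "tyassc emb \<Gamma> \<Delta>' (Cmd b (structN \<alpha> L M)) (Prod e (\<Delta> b))"
      using T_Cmd[OF M, of b] \<Delta>' by simp
    with False show ?thesis using TC_Sub[OF _ le] by auto
  qed
qed

text \<open>Structural substitution \<open>[\<alpha> \<Leftarrow> L]\<close> with \<open>L : d\<close> turns \<open>\<alpha> : d \<times> \<kappa>\<close> into \<open>\<alpha> : \<kappa>\<close>;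
  \<open>\<Delta>'\<close> is the context after this change.\<close>

lemma tyass_structN:
  "tyass emb \<Gamma> \<Delta> M \<tau> \<Longrightarrow> \<forall>x. wfD (\<Gamma> x) \<Longrightarrow> \<forall>a. wfC (\<Delta> a) \<Longrightarrow>
     \<Delta> \<alpha> = Prod d (\<Delta>' \<alpha>) \<Longrightarrow> \<forall>\<beta>. \<beta> \<noteq> \<alpha> \<longrightarrow> \<Delta>' \<beta> = \<Delta> \<beta> \<Longrightarrow> tyass emb \<Gamma> \<Delta>' L d \<Longrightarrow>
     tyass emb \<Gamma> \<Delta>' (structN \<alpha> L M) \<tau>"
  "tyassc emb \<Gamma> \<Delta> c \<kappa> \<Longrightarrow> \<forall>x. wfD (\<Gamma> x) \<Longrightarrow> \<forall>a. wfC (\<Delta> a) \<Longrightarrow>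
     \<Delta> \<alpha> = Prod d (\<Delta>' \<alpha>) \<Longrightarrow> \<forall>\<beta>. \<beta> \<noteq> \<alpha> \<longrightarrow> \<Delta>' \<beta> = \<Delta> \<beta> \<Longrightarrow> tyass emb \<Gamma> \<Delta>' L d \<Longrightarrow>
     c = Cmd b M \<Longrightarrow> \<exists>e. tyass emb \<Gamma> \<Delta>' (structN \<alpha> L M) e \<and> leqC emb (Prod e (\<Delta> b)) \<kappa>"
proof (induction arbitrary: \<alpha> \<Delta>' L and \<alpha> \<Delta>' L b M rule: tyass_tyassc.inducts)
  case (T_Abs d0 \<Gamma> \<Delta> M k0 r)
  have "tyass emb (case_nat d0 \<Gamma>) \<Delta>' (liftV 0 L) d"
    using tyass_liftV(1)[OF T_Abs.prems(5), of 0 d0] by (simp add: insert_at_0)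
  then have "tyass emb (case_nat d0 \<Gamma>) \<Delta>' (structN \<alpha> (liftV 0 L) M) (Arr k0 r)"
    using T_Abs by (simp split: nat.split)
  then show ?case by (simp add: T_Abs.hyps(1) tyass_tyassc.T_Abs)
next
  case (T_Mu k0 \<Gamma> \<Delta> c k' r)
  let ?D = "case_nat k0 \<Delta>" and ?D' = "case_nat k0 \<Delta>'"
  have D: "?D (Suc \<alpha>) = Prod d (?D' (Suc \<alpha>))" "\<forall>\<beta>. \<beta> \<noteq> Suc \<alpha> \<longrightarrow> ?D' \<beta> = ?D \<beta>"
    using T_Mu.prems(3,4) by (auto split: nat.split)
  have L: "tyass emb \<Gamma> ?D' (liftN 0 L) d"
    using tyass_liftN(1)[OF T_Mu.prems(5), of 0 k0] by (simp add: insert_at_0)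
  obtain b M0 where c: "c = Cmd b M0" by (cases c)
  have "\<forall>a. wfC (?D a)" using T_Mu.prems(2) T_Mu.hyps(1) by (simp split: nat.split)
  then obtain e where "tyass emb \<Gamma> ?D' (structN (Suc \<alpha>) (liftN 0 L) M0) e"
    and "leqC emb (Prod e (?D b)) (Prod (Arr k' r) k')"
    using T_Mu(3)[OF T_Mu.prems(1) _ D L c] by blast
  from tyassc_structNc_Cmd[OF this D L] c
  obtain k'' where "tyassc emb \<Gamma> ?D' (structNc (Suc \<alpha>) (liftN 0 L) c) (Prod (Arr k'' r) k'')"
    by auto
  then show ?case by (simp add: T_Mu.hyps(1) tyass_tyassc.T_Mu)
next
  case (T_Cmd \<Gamma> \<Delta> M' d' a)
  then show ?case
    using tyass_tyassc_wf(1)[OF T_Cmd(1)] by (blast intro: C_refl wfC.simps(1)[THEN iffD2])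
next
  case (TC_And \<Gamma> \<Delta> c s t)
  then obtain e1 e2 where
    "tyass emb \<Gamma> \<Delta>' (structN \<alpha> L M) e1" "leqC emb (Prod e1 (\<Delta> b)) s"
    "tyass emb \<Gamma> \<Delta>' (structN \<alpha> L M) e2" "leqC emb (Prod e2 (\<Delta> b)) t" by blast
  moreover have "\<forall>a. wfC (\<Delta>' a)" using TC_And.prems(2,3,4) by (metis wfC.simps(1))
  ultimately show ?case using TC_And.prems(1,2)
    by (blast intro: T_And leqC_Prod_AndC dest: tyass_tyassc_wf(1))
next
  case (TC_Om \<Gamma> \<Delta> c)
  then show ?case by (blast intro: T_Om C_top wfC.simps(1)[THEN iffD2] wfD.simps(2)[THEN iffD2])
next
  case (TC_Sub \<Gamma> \<Delta> c s t)
  then show ?case by (blast intro: C_trans)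
qed (simp_all, (blast intro: tyass_tyassc.intros)+)

lemma tyass_beta_redex:
  assumes \<Gamma>: "\<forall>x. wfD (\<Gamma> x)" and \<Delta>: "\<forall>a. wfC (\<Delta> a)"
    and "tyass emb \<Gamma> \<Delta> (App (Lam M) N) \<delta>"
  shows "tyass emb \<Gamma> \<Delta> (substV 0 N M) \<delta>"
  using assms(3)
proof (rule tyass_App_transfer)
  fix d k r
  assume L: "tyass emb \<Gamma> \<Delta> (Lam M) (Arr (Prod d k) r)" and N: "tyass emb \<Gamma> \<Delta> N d"
  have "wfD (Arr (Prod d k) r)" using tyass_tyassc_wf(1)[OF L \<Gamma> \<Delta>] .
  then have "tyass emb (case_nat d \<Gamma>) \<Delta> M (Arr k r)"
    using tyass_Lam_body[OF \<Gamma> \<Delta> L, of d k] by (simp add: C_refl)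
  then show "tyass emb \<Gamma> \<Delta> (substV 0 N M) (Arr k r)"
    by (rule tyass_substV(1)[OF _ insert_at_0[symmetric] N])
qed

lemma tyass_mu_redex:
  assumes \<Gamma>: "\<forall>x. wfD (\<Gamma> x)" and \<Delta>: "\<forall>a. wfC (\<Delta> a)"
    and "tyass emb \<Gamma> \<Delta> (App (Mu c) N) \<delta>"
  shows "tyass emb \<Gamma> \<Delta> (Mu (structNc 0 (liftN 0 N) c)) \<delta>"
  using assms(3)
proof (rule tyass_App_transfer)
  fix d k r
  assume C: "tyass emb \<Gamma> \<Delta> (Mu c) (Arr (Prod d k) r)" and N: "tyass emb \<Gamma> \<Delta> N d"
  let ?D = "case_nat (Prod d k) \<Delta>" and ?D' = "case_nat k \<Delta>"
  have "wfD (Arr (Prod d k) r)" using tyass_tyassc_wf(1)[OF C \<Gamma> \<Delta>] .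
  then have wf: "wfC (Prod d k)" "wfC k" "\<forall>a. wfC (?D a)"
    using \<Delta> by (simp_all split: nat.split)
  obtain k' where c: "tyassc emb \<Gamma> ?D c (Prod (Arr k' r) k')"
    using tyass_Mu_body[OF \<Gamma> \<Delta> C wf(1)] wf(1) by (auto simp: C_refl)
  have D: "?D 0 = Prod d (?D' 0)" "\<forall>\<beta>. \<beta> \<noteq> 0 \<longrightarrow> ?D' \<beta> = ?D \<beta>"
    by (auto split: nat.split)
  have L: "tyass emb \<Gamma> ?D' (liftN 0 N) d"
    using tyass_liftN(1)[OF N, of 0 k] by (simp add: insert_at_0)
  obtain b M where "c = Cmd b M" by (cases c)
  with tyass_structN(2)[OF c \<Gamma> wf(3) D L] tyassc_structNc_Cmd[OF _ _ D L]
  obtain k'' where "tyassc emb \<Gamma> ?D' (structNc 0 (liftN 0 N) c) (Prod (Arr k'' r) k'')"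
    by blast
  then show "tyass emb \<Gamma> \<Delta> (Mu (structNc 0 (liftN 0 N) c)) (Arr k r)"
    using wf(2) by (rule T_Mu[rotated])
qed

lemma tyassc_ren_redex:
  assumes \<Gamma>: "\<forall>x. wfD (\<Gamma> x)" and \<Delta>: "\<forall>a. wfC (\<Delta> a)"
    and "tyassc emb \<Gamma> \<Delta> (Cmd a (Mu c)) (Prod (Arr k' \<rho>) k')"
  shows "\<exists>k''. tyassc emb \<Gamma> \<Delta> (renNc 0 a c) (Prod (Arr k'' \<rho>) k'')"
proof -
  obtain e where C: "tyass emb \<Gamma> \<Delta> (Mu c) e" and le: "leqC emb (Prod e (\<Delta> a)) (Prod (Arr k' \<rho>) k')"
    using tyassc_Cmd_inv[OF assms] by blast
  have e: "leqD emb e (Arr k' \<rho>)" and a: "leqC emb (\<Delta> a) k'" using leqC_ProdD[OF le] by blast+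
  have "wfD (Arr k' \<rho>)" using leqD_leqC_wf(1)[OF e] by blast
  with a have "leqD emb (Arr k' \<rho>) (Arr (\<Delta> a) \<rho>)" by (simp add: D_arr R_refl)
  then have "tyass emb \<Gamma> \<Delta> (Mu c) (Arr (\<Delta> a) \<rho>)" using T_Sub[OF C D_trans[OF e]] by blast
  from tyass_Mu_body[OF \<Gamma> \<Delta> this spec[OF \<Delta>, of a]]
  obtain k'' where "tyassc emb \<Gamma> (case_nat (\<Delta> a) \<Delta>) c (Prod (Arr k'' \<rho>) k'')"
    using \<Delta> by (simp add: C_refl) blast
  then have "tyassc emb \<Gamma> (insert_at 0 (\<Delta> a) \<Delta>) c (Prod (Arr k'' \<rho>) k'')"
    by (simp only: insert_at_0)
  from tyass_renN(2)[OF this refl] show ?thesis by blast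
qed

lemma subject_reduction:
  "red M N \<Longrightarrow> \<forall>x. wfD (\<Gamma> x) \<Longrightarrow> \<forall>a. wfC (\<Delta> a) \<Longrightarrow>
     tyass emb \<Gamma> \<Delta> M \<delta> \<Longrightarrow> tyass emb \<Gamma> \<Delta> N \<delta>"
  "redc c c' \<Longrightarrow> \<forall>x. wfD (\<Gamma> x) \<Longrightarrow> \<forall>a. wfC (\<Delta> a) \<Longrightarrow>
     tyassc emb \<Gamma> \<Delta> c (Prod (Arr k' \<rho>) k') \<Longrightarrow> \<exists>k''. tyassc emb \<Gamma> \<Delta> c' (Prod (Arr k'' \<rho>) k'')"
proof (induction arbitrary: \<Gamma> \<Delta> \<delta> and \<Gamma> \<Delta> k' \<rho> rule: red_redc.inducts)
  case (beta M N)
  then show ?case by (rule tyass_beta_redex)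
next
  case (mu c N)
  then show ?case by (rule tyass_mu_redex)
next
  case (ren a c)
  then show ?case by (rule tyassc_ren_redex)
next
  case (lam M M')
  from lam.prems(3) show ?case
  proof (rule tyass_Lam_transfer)
    fix d k r assume "wfD d" and "tyass emb (case_nat d \<Gamma>) \<Delta> M (Arr k r)"
    with lam.IH lam.prems(1,2) have "tyass emb (case_nat d \<Gamma>) \<Delta> M' (Arr k r)"
      by (simp split: nat.split)
    with \<open>wfD d\<close> show "tyass emb \<Gamma> \<Delta> (Lam M') (Arr (Prod d k) r)" by (rule T_Abs)
  qed
next
  case (appL M M' N)
  from appL.prems(3) show ?case
    by (rule tyass_App_transfer) (use appL in \<open>blast intro: T_App\<close>)
next
  case (appR N N' M)
  from appR.prems(3) show ?case
    by (rule tyass_App_transfer) (use appR in \<open>blast intro: T_App\<close>)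
next
  case (muC c c')
  from muC.prems(3) show ?case
  proof (rule tyass_Mu_transfer)
    fix k k1 r assume "wfC k" and c: "tyassc emb \<Gamma> (case_nat k \<Delta>) c (Prod (Arr k1 r) k1)"
    then have "\<forall>a. wfC (case_nat k \<Delta> a)" using muC.prems(2) by (simp split: nat.split)
    then obtain k2 where "tyassc emb \<Gamma> (case_nat k \<Delta>) c' (Prod (Arr k2 r) k2)"
      using muC.IH[OF muC.prems(1) _ c] by blast
    with \<open>wfC k\<close> show "tyass emb \<Gamma> \<Delta> (Mu c') (Arr k r)" by (rule T_Mu)
  qed
next
  case (cmdC M M' a)
  then obtain e where "tyass emb \<Gamma> \<Delta> M' e" and "leqC emb (Prod e (\<Delta> a)) (Prod (Arr k' \<rho>) k')"
    using tyassc_Cmd_inv by blast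
  then show ?case by (blast intro: T_Cmd TC_Sub)
qed

theorem theorem5p4:
  fixes emb :: "'k \<Rightarrow> 'a::complete_lattice"
    and \<Gamma> :: "nat \<Rightarrow> 'k dty" and \<Delta> :: "nat \<Rightarrow> 'k cty"
    and M N :: trm and \<delta> :: "'k dty"
  assumes "omega_algebraic TYPE('a)"
    and "bij_betw emb UNIV {a::'a. compact_el a}"
    and "\<forall>x. wfD (\<Gamma> x)" and "finite {x. \<Gamma> x \<noteq> OmD}"
    and "\<forall>a. wfC (\<Delta> a)" and "finite {a. \<Delta> a \<noteq> OmC}"
    and "wfD \<delta>"
    and "red M N"
    and "tyass emb \<Gamma> \<Delta> M \<delta>"
  shows "tyass emb \<Gamma> \<Delta> N \<delta>"
  using subject_reduction(1)[OF assms(8) assms(3) assms(5) assms(9)] .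

end
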